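(* Let $\xi>0$, $v_2<v_1$ with either $v_2<0<v_1$ or $0<v_2<v_1$, and for $\lambda>0$ let $\tilde p(x,t|v_j)$ be the (generalized) density of $\tilde X(t)$, the position of the extended telegraph process driven by GCPs with parameter $\lambda$ with Poissonian resets to the origin at rate $\xi$, conditional on $\tilde X(0)=0$, $V(0)=v_j$. Then for $t>0$, $v_2t<x<v_1t$ and $j=1,2$, $$ \pi(x,t):=\lim_{\lambda\to+\infty}\tilde p(x,t|v_j)=\mathbb 1_{\{v_2t<x<v_1t\}}\frac{e^{-\xi t}}{(v_1-v_2)t}+\boldsymbol I(x,t)\frac{\xi}{v_1-v_2}\Gamma^\xi(x,t), $$ where $\Gamma^\xi(x,t)=\Gamma[0,M_x\xi,t\xi]$ if $v_2<0<v_1$ and $\Gamma^\xi(x,t)=\Gamma[0,\frac{x}{v_1}\xi,m_{x,t}\xi]$ if $0<v_2<v_1$.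
   Context: GCP with intensity $\lambda>0$: a Poisson process whose rate is random, exponentially distributed with mean $\lambda$; increments satisfy $P\{\tilde N_\lambda(t+s)-\tilde N_\lambda(t)=k\}=\frac{1}{1+\lambda s}(\frac{\lambda s}{1+\lambda s})^k$. The process: a particle starts at the origin with velocity $V(0)=v_j$ ($v_1,v_2\neq0$, $v_2<v_1$), moves with velocity alternating between $v_1$ and $v_2$, the periods at velocity $v_1$ and at $v_2$ being governed by two independent GCPs of intensity $\lambda$; additionally it is instantaneously reset to the origin at the epochs of an independent Poisson process of rate $\xi$, restarting afresh with velocity $v_j$. Equivalently, its density is $\tilde p(x,t|v_j)=e^{-\xi t}p(x,t|v_j)+\xi\int_0^te^{-\xi s}p(x,s|v_j)ds$, where $p(x,t|v_j)=\frac{\delta(x-v_jt)}{1+\lambda t}+\mathbb 1_{\{v_2t<x<v_1t\}}\frac{\lambda}{(v_1-v_2)(1+\lambda t)}$ is the (generalized, with Dirac delta $\delta$) density of the process without resets. Notation: $M_x=\max\{x/v_1,x/v_2\}$, $m_{x,t}=\min\{x/v_2,t\}$, $\Gamma(a,z_0,z_1)=\int_{z_0}^{z_1}s^{a-1}e^{-s}ds$, $\boldsymbol I(x,t)=\mathbb 1_{\{\min\{v_2t,0\}<x<v_1t\}}$. *)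

theory Defs
  imports "HOL-Analysis.Analysis"
begin

definition inc_Gamma :: "real \<Rightarrow> real \<Rightarrow> real \<Rightarrow> real" where
  "inc_Gamma a z0 z1 = integral {z0..z1} (\<lambda>s. s powr (a - 1) * exp (- s))"

text \<open>Absolutely continuous part of the density p(x,t|v_j) of the process without resets
  (the uniform part on the open interval (v2 t, v1 t)).\<close>
definition p_ac :: "real \<Rightarrow> real \<Rightarrow> real \<Rightarrow> real \<Rightarrow> real \<Rightarrow> real" where
  "p_ac lam v1 v2 x t =
     (if v2 * t < x \<and> x < v1 * t then lam / ((v1 - v2) * (1 + lam * t)) else 0)"

text \<open>Value of  int_0^t e^(-xi s) delta(x - vj s) / (1 + lam s) ds  (vj nonzero),
  using delta(x - vj s) = delta(s - x/vj) / |vj|.\<close>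
definition delta_int :: "real \<Rightarrow> real \<Rightarrow> real \<Rightarrow> real \<Rightarrow> real \<Rightarrow> real" where
  "delta_int lam xi vj x t =
     (let s0 = x / vj in
      if 0 < s0 \<and> s0 < t then exp (- xi * s0) / ((1 + lam * s0) * \<bar>vj\<bar>) else 0)"

text \<open>The density p~(x,t|vj) = e^(-xi t) p(x,t|vj) + xi int_0^t e^(-xi s) p(x,s|vj) ds,
  evaluated at a point x different from vj*t (where the Dirac term
  delta(x - vj t)/(1 + lam t) of the first summand vanishes).\<close>
definition p_tilde :: "real \<Rightarrow> real \<Rightarrow> real \<Rightarrow> real \<Rightarrow> real \<Rightarrow> real \<Rightarrow> real \<Rightarrow> real" where
  "p_tilde lam xi v1 v2 vj x t =
     exp (- xi * t) * p_ac lam v1 v2 x t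
     + xi * (delta_int lam xi vj x t
             + integral {0..t} (\<lambda>s. exp (- xi * s) * p_ac lam v1 v2 x s))"

definition M_x :: "real \<Rightarrow> real \<Rightarrow> real \<Rightarrow> real" where
  "M_x v1 v2 x = max (x / v1) (x / v2)"

definition m_xt :: "real \<Rightarrow> real \<Rightarrow> real \<Rightarrow> real" where
  "m_xt v2 x t = min (x / v2) t"

definition Ind :: "real \<Rightarrow> real \<Rightarrow> real \<Rightarrow> real \<Rightarrow> real" where
  "Ind v1 v2 x t = (if min (v2 * t) 0 < x \<and> x < v1 * t then 1 else 0)"

definition Gamma_xi :: "real \<Rightarrow> real \<Rightarrow> real \<Rightarrow> real \<Rightarrow> real \<Rightarrow> real" where
  "Gamma_xi xi v1 v2 x t =
     (if v2 < 0 \<and> 0 < v1 then inc_Gamma 0 (M_x v1 v2 x * xi) (t * xi)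
      else inc_Gamma 0 (x / v1 * xi) (m_xt v2 x t * xi))"

end

theory Submission
  imports Defs "HOL-Real_Asymp.Real_Asymp"
begin

text \<open>As \<open>\<lambda> \<rightarrow> \<infinity>\<close> the atoms \<open>\<delta>(x - v\<^sub>j s) / (1 + \<lambda> s)\<close> of \<open>p\<close> vanish and its uniform part
  \<open>\<lambda> / ((v\<^sub>1 - v\<^sub>2)(1 + \<lambda> s))\<close> tends to \<open>1 / ((v\<^sub>1 - v\<^sub>2) s)\<close>, uniformly for \<open>s\<close> bounded away
  from \<open>0\<close>. For \<open>x \<noteq> 0\<close> the times \<open>s \<in> [0, t]\<close> with \<open>v\<^sub>2 s < x < v\<^sub>1 s\<close> form an interval
  with endpoints \<open>0 < a \<le> b\<close> that depend on the signs of \<open>v\<^sub>2\<close> and \<open>x\<close>, so the reset integral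
  converges to the integral of \<open>e^(-\<xi> s) / ((v\<^sub>1 - v\<^sub>2) s)\<close> over \<open>[a, b]\<close>; the substitution
  \<open>u = \<xi> s\<close> turns this into \<open>\<Gamma>(0, a \<xi>, b \<xi>) / (v\<^sub>1 - v\<^sub>2)\<close>.\<close>

lemma tendsto_integral_uniform_bound:
  fixes f :: "'a \<Rightarrow> real \<Rightarrow> 'b::banach"
  assumes f_int: "\<forall>\<^sub>F n in F. f n integrable_on {a..b}"
    and g_int: "g integrable_on {a..b}"
    and bound: "\<forall>\<^sub>F n in F. \<forall>s\<in>{a..b}. norm (f n s - g s) \<le> e n"
    and e: "(e \<longlongrightarrow> 0) F"
  shows "((\<lambda>n. integral {a..b} (f n)) \<longlongrightarrow> integral {a..b} g) F"
proof -
  have "\<forall>\<^sub>F n in F. norm (integral {a..b} (f n) - integral {a..b} g) \<le> measure lborel {a..b} * e n"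
    using f_int bound
  proof eventually_elim
    case (elim n)
    have "norm (integral {a..b} (f n) - integral {a..b} g) = norm (integral {a..b} (\<lambda>s. f n s - g s))"
      using elim(1) g_int by (simp add: integral_diff)
    also have "\<dots> \<le> integral {a..b} (\<lambda>_. e n)"
      using elim g_int by (intro integral_norm_bound_integral integrable_diff) auto
    finally show ?case by simp
  qed
  moreover have "((\<lambda>n. measure lborel {a..b} * e n) \<longlongrightarrow> 0) F"
    using e by (rule tendsto_mult_right_zero)
  ultimately show ?thesis
    by (subst LIM_zero_iff[symmetric]) (rule Lim_null_comparison)
qed

lemma integral_eq_Icc_if_between:
  fixes h :: "real \<Rightarrow> 'b::banach"
  assumes "{a<..<b} \<subseteq> T" "T \<subseteq> {a..b}"
  shows "integral T h = integral {a..b} h"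
proof (rule integral_spike_set)
  have "{s \<in> T - {a..b}. h s \<noteq> 0} = {}"
    using assms(2) by blast
  then show "negligible {s \<in> T - {a..b}. h s \<noteq> 0}"
    by (simp only: negligible_empty)
  have "{s \<in> {a..b} - T. h s \<noteq> 0} \<subseteq> {a, b}"
    using assms(1) by (force simp: subset_eq)
  then show "negligible {s \<in> {a..b} - T. h s \<noteq> 0}"
    by (rule negligible_subset[rotated]) simp
qed

lemma integral_exp_over_eq_inc_Gamma:
  fixes a b xi :: real
  assumes "0 < a" "0 < xi"
  shows "integral {a..b} (\<lambda>s. exp (- xi * s) / s) = inc_Gamma 0 (a * xi) (b * xi)"
proof -
  have "(\<lambda>u. u / xi) ` {a * xi..b * xi} = {a..b}"
    using assms by (auto simp: image_def field_simps intro!: bexI[of _ "_ * xi"])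
  then have "integral {a..b} (\<lambda>s. (xi * s) powr (0 - 1) * exp (- (xi * s)))
      = inc_Gamma 0 (a * xi) (b * xi) / xi"
    using integral_stretch_real[where m = xi and f = "\<lambda>u. u powr (0 - 1) * exp (- u)"
                                and a = "a * xi" and b = "b * xi"] assms
    by (simp add: inc_Gamma_def)
  moreover have "integral {a..b} (\<lambda>s. (xi * s) powr (0 - 1) * exp (- (xi * s)))
      = integral {a..b} (\<lambda>s. exp (- xi * s) / s) / xi"
  proof -
    have "integral {a..b} (\<lambda>s. (xi * s) powr (0 - 1) * exp (- (xi * s)))
        = integral {a..b} (\<lambda>s. exp (- xi * s) / s / xi)"
      using assms by (intro integral_cong) (auto simp: powr_minus_divide field_simps)
    also have "\<dots> = integral {a..b} (\<lambda>s. exp (- xi * s) / s) / xi"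
      by (rule integral_divide)
    finally show ?thesis .
  qed
  ultimately show ?thesis using assms by simp
qed

text \<open>\<open>\<lambda> / (1 + \<lambda> s)\<close> is the hazard rate of the first arrival of a GCP of intensity \<open>\<lambda>\<close>,
  whose survival function is \<open>1 / (1 + \<lambda> s)\<close>.\<close>

lemma hazard_approx_inverse:
  fixes lam a s :: real
  assumes "0 < lam" "0 < a" "a \<le> s"
  shows "\<bar>lam / (1 + lam * s) - 1 / s\<bar> \<le> 1 / (lam * a\<^sup>2)"
proof -
  have s: "0 < s" using assms by simp
  have "1 + lam * s > 0" using assms s by (simp add: add_pos_pos)
  then have "lam / (1 + lam * s) - 1 / s = - (1 / (s * (1 + lam * s)))"
    using s by (simp add: field_simps)
  then have "\<bar>lam / (1 + lam * s) - 1 / s\<bar> = 1 / (s * (1 + lam * s))"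
    using \<open>1 + lam * s > 0\<close> s by simp
  also have "\<dots> \<le> 1 / (a * (lam * a))"
  proof (rule divide_left_mono)
    have "lam * a \<le> 1 + lam * s" using assms mult_left_mono[of a s lam] by linarith
    then show "a * (lam * a) \<le> s * (1 + lam * s)"
      using assms by (auto intro!: mult_mono)
    show "0 < s * (1 + lam * s) * (a * (lam * a))"
      using assms \<open>1 + lam * s > 0\<close> by simp
  qed simp
  finally show ?thesis by (simp add: power2_eq_square mult_ac)
qed

lemma hazard_tendsto_inverse:
  fixes s :: real
  assumes "0 < s"
  shows "((\<lambda>lam. lam / (1 + lam * s)) \<longlongrightarrow> 1 / s) at_top"
  unfolding inverse_eq_divide[symmetric] using assms by real_asymp

lemma tendsto_integral_hazard:
  fixes w :: "real \<Rightarrow> real"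
  assumes "0 < a" and w: "continuous_on {a..b} w"
  shows "((\<lambda>lam. integral {a..b} (\<lambda>s. w s * (lam / (1 + lam * s))))
           \<longlongrightarrow> integral {a..b} (\<lambda>s. w s / s)) at_top"
proof -
  obtain B where "0 \<le> B" and B: "\<And>s. s \<in> {a..b} \<Longrightarrow> \<bar>w s\<bar> \<le> B"
    using continuous_on_compact_bound[OF compact_Icc w] by auto
  show ?thesis
  proof (rule tendsto_integral_uniform_bound)
    show "\<forall>\<^sub>F lam in at_top. \<forall>s\<in>{a..b}. norm (w s * (lam / (1 + lam * s)) - w s / s) \<le> B / (lam * a\<^sup>2)"
      unfolding real_norm_def
    proof (rule eventually_at_top_linorderI[of 1], intro ballI)
      fix lam s :: real assume "1 \<le> lam" "s \<in> {a..b}"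
      then have "\<bar>w s * (lam / (1 + lam * s) - 1 / s)\<bar> \<le> B * (1 / (lam * a\<^sup>2))"
        unfolding abs_mult using assms B \<open>0 \<le> B\<close> by (intro mult_mono hazard_approx_inverse) auto
      then show "\<bar>w s * (lam / (1 + lam * s)) - w s / s\<bar> \<le> B / (lam * a\<^sup>2)"
        by (simp add: right_diff_distrib)
    qed
    show "((\<lambda>lam. B / (lam * a\<^sup>2)) \<longlongrightarrow> 0) at_top"
      using \<open>0 < a\<close> by real_asymp
    show "\<forall>\<^sub>F lam in at_top. (\<lambda>s. w s * (lam / (1 + lam * s))) integrable_on {a..b}"
    proof (rule eventually_at_top_linorderI[of 0])
      fix lam :: real assume "0 \<le> lam"
      then have pos: "0 < 1 + lam * s" if "s \<in> {a..b}" for s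
        using \<open>0 < a\<close> that by (intro add_pos_nonneg) auto
      show "(\<lambda>s. w s * (lam / (1 + lam * s))) integrable_on {a..b}"
        by (intro integrable_continuous_interval continuous_intros w) (use pos in force)
    qed
    show "(\<lambda>s. w s / s) integrable_on {a..b}"
      using \<open>0 < a\<close> by (intro integrable_continuous_interval continuous_intros w) auto
  qed
qed

definition interior_times :: "real \<Rightarrow> real \<Rightarrow> real \<Rightarrow> real \<Rightarrow> real set" where
  "interior_times v1 v2 x t = {s \<in> {0..t}. v2 * s < x \<and> x < v1 * s}"

lemma interior_times_opposite_signs_pos:
  assumes "v2 < 0" "0 < v1" "0 < x"
  shows "interior_times v1 v2 x t = {x / v1<..t}"
  unfolding interior_times_def using assms
  by (auto simp: field_simps) (smt (verit) zero_less_mult_iff mult_less_0_iff)+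

lemma interior_times_opposite_signs_neg:
  assumes "v2 < 0" "0 < v1" "x < 0"
  shows "interior_times v1 v2 x t = {x / v2<..t}"
  unfolding interior_times_def using assms
  by (auto simp: field_simps) (smt (verit) mult_less_0_iff)+

lemma interior_times_same_sign:
  assumes "0 < v2" "v2 < v1" "0 < x"
  shows "interior_times v1 v2 x t = {x / v1<..<x / v2} \<inter> {..t}"
  unfolding interior_times_def using assms
  by (auto simp: field_simps) (smt (verit) zero_less_mult_iff)

lemma interior_times_interval:
  assumes regime: "(v2 < 0 \<and> 0 < v1) \<or> (0 < v2 \<and> v2 < v1)"
    and "0 < t" "v2 * t < x" "x \<noteq> 0"
  obtains a b where "0 < a"
    "{a<..<b} \<subseteq> interior_times v1 v2 x t" "interior_times v1 v2 x t \<subseteq> {a..b}"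
    "Gamma_xi xi v1 v2 x t = inc_Gamma 0 (a * xi) (b * xi)"
proof -
  have "0 < v2 \<Longrightarrow> 0 < x"
    using assms(2,3) mult_pos_pos[of v2 t] by linarith
  then consider (pos) "v2 < 0" "0 < v1" "0 < x" | (neg) "v2 < 0" "0 < v1" "x < 0" | (same) "0 < v2" "v2 < v1" "0 < x"
    using regime \<open>x \<noteq> 0\<close> by (cases "0 < x") auto
  then show thesis
  proof cases
    case pos
    then have "x / v2 < 0" "0 < x / v1"
      by (simp_all add: divide_pos_neg)
    then have "M_x v1 v2 x = x / v1"
      by (simp add: M_x_def max_def)
    then show thesis
      by (intro that[of "x / v1" t])
        (use pos in \<open>auto simp: interior_times_opposite_signs_pos Gamma_xi_def\<close>)
  next
    case neg
    then have "x / v1 < 0" "0 < x / v2"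
      by (simp_all add: divide_neg_pos divide_neg_neg)
    then have "M_x v1 v2 x = x / v2"
      by (simp add: M_x_def max_def)
    then show thesis
      by (intro that[of "x / v2" t])
        (use neg in \<open>auto simp: interior_times_opposite_signs_neg Gamma_xi_def divide_neg_neg\<close>)
  next
    case same
    then show thesis
      by (intro that[of "x / v1" "min (x / v2) t"])
        (use same in \<open>auto simp: interior_times_same_sign Gamma_xi_def m_xt_def\<close>)
  qed
qed

lemma integral_p_ac_eq:
  assumes "{a<..<b} \<subseteq> interior_times v1 v2 x t" "interior_times v1 v2 x t \<subseteq> {a..b}"
  shows "integral {0..t} (\<lambda>s. w s * p_ac lam v1 v2 x s)
       = integral {a..b} (\<lambda>s. w s * (lam / (1 + lam * s))) / (v1 - v2)"
proof -
  define k where "k s = w s * (lam / (1 + lam * s)) / (v1 - v2)" for s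
  have "integral {0..t} (\<lambda>s. w s * p_ac lam v1 v2 x s)
      = integral {0..t} (\<lambda>s. if s \<in> interior_times v1 v2 x t then k s else 0)"
    by (rule integral_cong) (auto simp: p_ac_def interior_times_def k_def)
  also have "\<dots> = integral (interior_times v1 v2 x t) k"
  proof -
    have "interior_times v1 v2 x t \<inter> {0..t} = interior_times v1 v2 x t"
      by (auto simp: interior_times_def)
    then show ?thesis
      using integral_restrict_Int[of "{0..t}" "interior_times v1 v2 x t" k] by simp
  qed
  also have "\<dots> = integral {a..b} k"
    using assms by (rule integral_eq_Icc_if_between)
  also have "\<dots> = integral {a..b} (\<lambda>s. w s * (lam / (1 + lam * s))) / (v1 - v2)"
    unfolding k_def by (rule integral_divide)
  finally show ?thesis .
qed

lemma p_ac_tendsto: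
  assumes "0 < s"
  shows "((\<lambda>lam. p_ac lam v1 v2 x s)
           \<longlongrightarrow> (if v2 * s < x \<and> x < v1 * s then 1 / ((v1 - v2) * s) else 0)) at_top"
proof (cases "v2 * s < x \<and> x < v1 * s")
  case True
  have "((\<lambda>lam. lam / (1 + lam * s) * inverse (v1 - v2)) \<longlongrightarrow> 1 / ((v1 - v2) * s)) at_top"
    using tendsto_mult_right[OF hazard_tendsto_inverse[OF assms], of "inverse (v1 - v2)"]
    by (simp add: divide_inverse mult_ac)
  moreover have "p_ac lam v1 v2 x s = lam / (1 + lam * s) * inverse (v1 - v2)" for lam
    using True by (simp add: p_ac_def divide_inverse mult_ac)
  ultimately show ?thesis
    using True by simp
next
  case False
  show ?thesis
    unfolding p_ac_def if_not_P[OF False] by simp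
qed

lemma delta_int_tendsto_0: "((\<lambda>lam. delta_int lam xi vj x t) \<longlongrightarrow> 0) at_top"
proof (cases "0 < x / vj \<and> x / vj < t")
  case True
  have "((\<lambda>lam. c / ((1 + lam * s0) * d)) \<longlongrightarrow> 0) at_top" if "0 < s0" "0 < d" for c s0 d :: real
    using that by real_asymp
  moreover have "0 < \<bar>vj\<bar>"
    using True by auto
  ultimately have "((\<lambda>lam. exp (- xi * (x / vj)) / ((1 + lam * (x / vj)) * \<bar>vj\<bar>)) \<longlongrightarrow> 0) at_top"
    using True by blast
  then show ?thesis
    using True by (simp add: delta_int_def Let_def)
next
  case False
  show ?thesis
    unfolding delta_int_def Let_def if_not_P[OF False] by simp
qed

theorem corollary2:
  fixes xi v1 v2 vj x t :: real
  assumes "xi > 0" and "v2 < v1"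
    and "(v2 < 0 \<and> 0 < v1) \<or> (0 < v2 \<and> v2 < v1)"
    and "vj = v1 \<or> vj = v2"
    and "t > 0" and "v2 * t < x" and "x < v1 * t"
    and "x \<noteq> 0"
  shows "((\<lambda>lam. p_tilde lam xi v1 v2 vj x t) \<longlongrightarrow>
            (if v2 * t < x \<and> x < v1 * t then exp (- xi * t) / ((v1 - v2) * t) else 0)
            + Ind v1 v2 x t * xi / (v1 - v2) * Gamma_xi xi v1 v2 x t) at_top"
proof -
  obtain a b where "0 < a"
    and between: "{a<..<b} \<subseteq> interior_times v1 v2 x t" "interior_times v1 v2 x t \<subseteq> {a..b}"
    and Gamma: "Gamma_xi xi v1 v2 x t = inc_Gamma 0 (a * xi) (b * xi)"
    using interior_times_interval[OF assms(3,5,6,8)] by blast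
  have p_tilde_eq: "p_tilde lam xi v1 v2 vj x t = exp (- xi * t) * p_ac lam v1 v2 x t
      + xi * (delta_int lam xi vj x t
              + integral {a..b} (\<lambda>s. exp (- xi * s) * (lam / (1 + lam * s))) / (v1 - v2))" for lam
    unfolding p_tilde_def integral_p_ac_eq[OF between] ..
  have "((\<lambda>lam. p_ac lam v1 v2 x t) \<longlongrightarrow> 1 / ((v1 - v2) * t)) at_top"
    using p_ac_tendsto[OF \<open>t > 0\<close>, of v1 v2 x] assms(6,7) by simp
  \<comment> \<open>The atom term vanishes whatever \<open>vj\<close> is.\<close>
  then have lim: "((\<lambda>lam. p_tilde lam xi v1 v2 vj x t) \<longlongrightarrow> exp (- xi * t) * (1 / ((v1 - v2) * t))
      + xi * (0 + integral {a..b} (\<lambda>s. exp (- xi * s) / s) / (v1 - v2))) at_top"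
    unfolding p_tilde_eq
    by (intro tendsto_intros delta_int_tendsto_0 tendsto_integral_hazard \<open>0 < a\<close>
        continuous_intros) (use assms(2) in auto)
  have Ind: "Ind v1 v2 x t = 1"
    using assms(3,5,6,7) mult_pos_pos[of v2 t] by (auto simp: Ind_def min_def)
  show ?thesis
    using lim Ind Gamma integral_exp_over_eq_inc_Gamma[OF \<open>0 < a\<close> \<open>xi > 0\<close>] assms(6,7)
    by simp
qed

end
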